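(* Let $\lambda>0$, let $A\in\mathbb{R}^{3\times3}$ have singular values $\lambda_1\le\lambda_2\le\lambda_3$, and set $\alpha=\lambda_2\lambda_3-\lambda\lambda_1$, $\beta=\lambda_1\lambda_3-\lambda\lambda_2$, $\gamma=\lambda_1\lambda_2-\lambda\lambda_3$. Then for every $R\in SO(3)$, the quantity $g(R)=(1-R_{11})\alpha+(1-R_{22})\beta+(1-R_{33})\gamma$ satisfies $$g(R)\ge\min\{2(\beta+\gamma),0\}.$$
   Context: Singular values of $A$ are the square roots of the eigenvalues of $A^TA$; $SO(3)$ is the group of $3\times3$ orthogonal matrices of determinant $1$; $R_{ij}$ is the $(i,j)$ entry of $R$. *)

theory Defs
  imports "HOL-Analysis.Analysis"
begin

definition sorted_singular_values3 ::
  "real^3^3 \<Rightarrow> real \<Rightarrow> real \<Rightarrow> real \<Rightarrow> bool" where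
  "sorted_singular_values3 A l1 l2 l3 \<longleftrightarrow>
     0 \<le> l1 \<and> l1 \<le> l2 \<and> l2 \<le> l3 \<and>
     (\<forall>x::real. det (mat x - transpose A ** A) = (x - l1^2) * (x - l2^2) * (x - l3^2))"

definition SO3 :: "(real^3^3) set" where
  "SO3 = {R. orthogonal_matrix R \<and> det R = 1}"

end

(* The diagonal (R11, R22, R33) of a rotation R lies in the tetrahedron spanned by
   (1,1,1), (1,-1,-1), (-1,1,-1), (-1,-1,1). Indeed tr R >= -1, since the cofactor identities
   R = cof R give 4 (1 + tr R) = (1 + tr R)^2 + |R - R^T|^2 / 2; the other three facets follow
   by applying this to R D with D = diag(1,-1,-1), diag(-1,1,-1), diag(-1,-1,1). As g is affine
   in the diagonal, it is bounded below by its values 0, 2(beta+gamma), 2(alpha+gamma),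
   2(alpha+beta) at the vertices, and alpha >= beta, gamma by the ordering of the singular
   values. *)
theory Submission
  imports Defs
begin

lemma rotation_matrix_mul:
  fixes A B :: "real^'n^'n"
  assumes "rotation_matrix A" "rotation_matrix B"
  shows "rotation_matrix (A ** B)"
  using assms by (simp add: rotation_matrix_def orthogonal_matrix_mul det_mul)

lemma rotation_matrix_sign_diagonal:
  fixes s :: "real^'n"
  assumes "\<And>i. s$i = 1 \<or> s$i = -1" and "(\<Prod>i\<in>UNIV. s$i) = 1"
  shows "rotation_matrix (\<chi> i j. if i = j then s$i else 0)"
proof -
  have "s$i * s$i = 1" for i
    using assms(1)[of i] by auto
  then have "orthogonal_matrix (\<chi> i j. if i = j then s$i else 0)"
    by (simp add: orthogonal_matrix_def matrix_matrix_mult_def transpose_def mat_def vec_eq_iff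
        if_distrib[of "\<lambda>x. x * _"] cong: if_cong)
  moreover have "det (\<chi> i j. if i = j then s$i else 0) = 1"
    using assms(2) by (simp add: det_diagonal)
  ultimately show ?thesis
    by (simp add: rotation_matrix_def)
qed

lemma matrix_mul_diagonal_diag:
  fixes A :: "'a::comm_semiring_1^'n^'n"
  shows "(A ** (\<chi> i j. if i = j then s$i else 0))$k$k = A$k$k * s$k"
  by (simp add: matrix_matrix_mult_def if_distrib[of "\<lambda>x. _ * x"] cong: if_cong)

lemma orthogonal_matrix_sum_sq_entries:
  fixes R :: "real^'n^'n"
  assumes "orthogonal_matrix R"
  shows "(\<Sum>i\<in>UNIV. \<Sum>j\<in>UNIV. (R$i$j)\<^sup>2) = real CARD('n)"
proof -
  have "trace (R ** transpose R) = real CARD('n)"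
    using assms by (simp add: orthogonal_matrix_def trace_I)
  then show ?thesis
    by (simp add: trace_def matrix_matrix_mult_def transpose_def power2_eq_square)
qed

text \<open>Each column of a rotation is the cross product of the next two.\<close>

lemma rotation_matrix_3_cofactors:
  fixes R :: "real^3^3"
  assumes "rotation_matrix R"
  shows "R$1$1 = R$2$2 * R$3$3 - R$2$3 * R$3$2"
    and "R$2$2 = R$3$3 * R$1$1 - R$3$1 * R$1$3"
    and "R$3$3 = R$1$1 * R$2$2 - R$1$2 * R$2$1"
proof -
  have column: "(R *v axis j 1)$i = R$i$j" for i j
    by (simp add: matrix_vector_mult_def axis_def if_distrib[of "\<lambda>x. _ * x"] cong: if_cong)
  have "cross3 (R *v axis j 1) (R *v axis k 1) = R *v cross3 (axis j 1) (axis k 1)" for j k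
    using cross_rotation_matrix[OF assms] .
  from this[of 2 3] this[of 3 1] this[of 1 2] show
    "R$1$1 = R$2$2 * R$3$3 - R$2$3 * R$3$2"
    "R$2$2 = R$3$3 * R$1$1 - R$3$1 * R$1$3"
    "R$3$3 = R$1$1 * R$2$2 - R$1$2 * R$2$1"
    by (simp_all add: cross_basis vec_eq_iff forall_3 cross_components column)
qed

lemma rotation_matrix_3_trace_ge:
  fixes R :: "real^3^3"
  assumes "rotation_matrix R"
  shows "-1 \<le> trace R"
proof -
  let ?t = "R$1$1 + R$2$2 + R$3$3"
  have "(\<Sum>i\<in>UNIV. \<Sum>j\<in>UNIV. (R$i$j)\<^sup>2) = 3"
    using orthogonal_matrix_sum_sq_entries[of R] assms by (simp add: rotation_matrix_def)
  then have sum_sq: "(R$1$1)\<^sup>2 + (R$1$2)\<^sup>2 + (R$1$3)\<^sup>2 + (R$2$1)\<^sup>2 + (R$2$2)\<^sup>2 + (R$2$3)\<^sup>2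
      + (R$3$1)\<^sup>2 + (R$3$2)\<^sup>2 + (R$3$3)\<^sup>2 = 3"
    by (simp add: sum_3 add.assoc)
  have "(1 + ?t)\<^sup>2 + (R$3$2 - R$2$3)\<^sup>2 + (R$1$3 - R$3$1)\<^sup>2 + (R$2$1 - R$1$2)\<^sup>2
      = 1 + 2 * ?t + ((R$1$1)\<^sup>2 + (R$1$2)\<^sup>2 + (R$1$3)\<^sup>2 + (R$2$1)\<^sup>2 + (R$2$2)\<^sup>2
          + (R$2$3)\<^sup>2 + (R$3$1)\<^sup>2 + (R$3$2)\<^sup>2 + (R$3$3)\<^sup>2)
        + 2 * ((R$2$2 * R$3$3 - R$2$3 * R$3$2) + (R$3$3 * R$1$1 - R$3$1 * R$1$3)
          + (R$1$1 * R$2$2 - R$1$2 * R$2$1))"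
    by algebra
  also have "\<dots> = 4 * (1 + ?t)"
    unfolding sum_sq rotation_matrix_3_cofactors[OF assms, symmetric] by simp
  finally have "0 \<le> 4 * (1 + ?t)"
    by (metis add_nonneg_nonneg zero_le_power2)
  then show ?thesis
    by (simp add: trace_def sum_3)
qed

lemma rotation_matrix_3_diagonal_bound:
  fixes R :: "real^3^3" and a b c :: real
  assumes "rotation_matrix R" and "a \<in> {1, -1}" "b \<in> {1, -1}" "c \<in> {1, -1}" and "a * b * c = 1"
  shows "-1 \<le> a * R$1$1 + b * R$2$2 + c * R$3$3"
proof -
  define s :: "real^3" where "s = vector [a, b, c]"
  have s: "s$1 = a" "s$2 = b" "s$3 = c"
    by (simp_all add: s_def)
  let ?D = "\<chi> i j. if i = j then s$i else 0"
  have "s$i \<in> {a, b, c}" for i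
    using exhaust_3[of i] s by auto
  then have "s$i = 1 \<or> s$i = -1" for i
    using assms(2-4) by blast
  moreover have "(\<Prod>i\<in>UNIV. s$i) = 1"
    using assms(5) unfolding UNIV_3 by (simp add: s mult.assoc)
  ultimately have "rotation_matrix ?D"
    by (rule rotation_matrix_sign_diagonal)
  then have "-1 \<le> trace (R ** ?D)"
    using assms(1) by (intro rotation_matrix_3_trace_ge rotation_matrix_mul)
  then show ?thesis
    by (simp add: trace_def sum_3 matrix_mul_diagonal_diag s mult.commute)
qed

lemma rotation_matrix_3_diagonal_tetrahedron:
  fixes R :: "real^3^3"
  assumes "rotation_matrix R"
  shows "0 \<le> 1 + R$1$1 + R$2$2 + R$3$3" and "0 \<le> 1 + R$1$1 - R$2$2 - R$3$3"
    and "0 \<le> 1 - R$1$1 + R$2$2 - R$3$3" and "0 \<le> 1 - R$1$1 - R$2$2 + R$3$3"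
  using rotation_matrix_3_diagonal_bound[OF assms, of 1 1 1]
    rotation_matrix_3_diagonal_bound[OF assms, of 1 "-1" "-1"]
    rotation_matrix_3_diagonal_bound[OF assms, of "-1" 1 "-1"]
    rotation_matrix_3_diagonal_bound[OF assms, of "-1" "-1" 1]
  by simp_all

lemma tetrahedron_linear_lower_bound:
  fixes x y z \<alpha> \<beta> \<gamma> :: real
  assumes "0 \<le> 1 + x + y + z" "0 \<le> 1 + x - y - z" "0 \<le> 1 - x + y - z" "0 \<le> 1 - x - y + z"
    and "\<beta> \<le> \<alpha>" "\<gamma> \<le> \<alpha>"
  shows "min (2 * (\<beta> + \<gamma>)) 0 \<le> (1 - x) * \<alpha> + (1 - y) * \<beta> + (1 - z) * \<gamma>"
proof -
  text \<open>Barycentric coordinates of (x, y, z) at the vertices where the bound is not 0.\<close>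
  define t1 t2 t3 where "t1 = (1 + x - y - z) / 4" and "t2 = (1 - x + y - z) / 4"
    and "t3 = (1 - x - y + z) / 4"
  have t: "0 \<le> t1" "0 \<le> t2" "0 \<le> t3" "t1 + t2 + t3 \<le> 1"
    using assms(1-4) by (auto simp: t1_def t2_def t3_def field_simps)
  have "(1 - x) * \<alpha> + (1 - y) * \<beta> + (1 - z) * \<gamma>
      = 2 * (t1 * (\<beta> + \<gamma>) + t2 * (\<alpha> + \<gamma>) + t3 * (\<alpha> + \<beta>))"
    by (simp add: t1_def t2_def t3_def field_simps)
  also have "\<dots> \<ge> 2 * ((t1 + t2 + t3) * (\<beta> + \<gamma>))"
    using t assms(5,6) mult_left_mono[of \<beta> \<alpha> t2] mult_left_mono[of \<gamma> \<alpha> t3]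
    by (simp add: algebra_simps)
  moreover have "2 * ((t1 + t2 + t3) * (\<beta> + \<gamma>)) \<ge> min (2 * (\<beta> + \<gamma>)) 0"
  proof (cases "0 \<le> \<beta> + \<gamma>")
    case True
    then show ?thesis
      using t by simp
  next
    case False
    then have "(t1 + t2 + t3) * (\<beta> + \<gamma>) \<ge> \<beta> + \<gamma>"
      using t mult_right_mono_neg[of "t1 + t2 + t3" 1 "\<beta> + \<gamma>"] by simp
    then show ?thesis
      by simp
  qed
  ultimately show ?thesis
    by linarith
qed

lemma sorted_singular_values3_weights_le:
  assumes "sorted_singular_values3 A l1 l2 l3" and "0 < lam"
  shows "l1 * l3 - lam * l2 \<le> l2 * l3 - lam * l1"
    and "l1 * l2 - lam * l3 \<le> l2 * l3 - lam * l1"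
proof -
  have l: "0 \<le> l1" "l1 \<le> l2" "l2 \<le> l3"
    using assms(1) by (auto simp: sorted_singular_values3_def)
  have "0 \<le> (l2 - l1) * (l3 + lam)" "0 \<le> (l3 - l1) * (l2 + lam)"
    using l assms(2) by simp_all
  then show "l1 * l3 - lam * l2 \<le> l2 * l3 - lam * l1" "l1 * l2 - lam * l3 \<le> l2 * l3 - lam * l1"
    by (simp_all add: algebra_simps)
qed

theorem lemma4p4:
  fixes A R :: "real^3^3" and lam l1 l2 l3 \<alpha> \<beta> \<gamma> :: real
  assumes "lam > 0"
    and "sorted_singular_values3 A l1 l2 l3"
    and "\<alpha> = l2 * l3 - lam * l1"
    and "\<beta> = l1 * l3 - lam * l2"
    and "\<gamma> = l1 * l2 - lam * l3"
    and "R \<in> SO3"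
  shows "(1 - R$1$1) * \<alpha> + (1 - R$2$2) * \<beta> + (1 - R$3$3) * \<gamma> \<ge> min (2 * (\<beta> + \<gamma>)) 0"
proof -
  have "rotation_matrix R"
    using assms(6) by (simp add: SO3_def rotation_matrix_def)
  moreover have "\<beta> \<le> \<alpha>" "\<gamma> \<le> \<alpha>"
    using sorted_singular_values3_weights_le[OF assms(2,1)] assms(3-5) by simp_all
  ultimately show ?thesis
    using tetrahedron_linear_lower_bound rotation_matrix_3_diagonal_tetrahedron by blast
qed

end
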